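(* Let $S$ be an additive numerical semigroup with multiplicity $e$ whose blowup $B$ equals $\mathbb N$ (equivalently, $a_1-e=1$). Then ${\rm d}_{\max}(S)=d(e-1;B^{\mathcal D})$.
   Context: $S$ is a numerical semigroup (a submonoid of $\mathbb N$ with finite complement) with minimal generators $e<a_1<\dots<a_t$. An $S$-factorization of $n$ is $(c_0,\dots,c_t)\in\mathbb N^{t+1}$ with $c_0e+\sum c_ia_i=n$, of length $\sum c_i$. ${\rm ord}(n;S)$ is the maximal such length, ${\rm d}_{\max}(n;S)$ is the number of factorizations of maximal length, and ${\rm d}_{\max}(S)=\max_{n\in S}{\rm d}_{\max}(n;S)$. $S$ is additive if ${\rm ord}(u+e;S)={\rm ord}(u;S)+1$ for all $u\in S$. The blowup is $B=\langle e,d_1,\dots,d_t\rangle$ with $d_i=a_i-e$, and $\mathcal D=(e,d_1,\dots,d_t)$. $d(b;B^{\mathcal D})$ is the number of tuples $(x_0,\dots,x_t)\in\mathbb N^{t+1}$ with $x_0e+\sum x_id_i=b$. *)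

theory Defs
  imports Main
begin

definition numerical_semigroup :: "nat set \<Rightarrow> bool" where
  "numerical_semigroup S \<longleftrightarrow> 0 \<in> S \<and> (\<forall>x\<in>S. \<forall>y\<in>S. x + y \<in> S) \<and> finite (UNIV - S)"

definition min_gens :: "nat set \<Rightarrow> nat set" where
  "min_gens S = {g \<in> S. g \<noteq> 0 \<and> \<not> (\<exists>x\<in>S. \<exists>y\<in>S. x \<noteq> 0 \<and> y \<noteq> 0 \<and> x + y = g)}"

definition multiplicity :: "nat set \<Rightarrow> nat" where
  "multiplicity S = Min (S - {0})"

definition factorizations :: "nat set \<Rightarrow> nat \<Rightarrow> (nat \<Rightarrow> nat) set" where
  "factorizations S n = {c. (\<forall>g. g \<notin> min_gens S \<longrightarrow> c g = 0) \<and> (\<Sum>g\<in>min_gens S. c g * g) = n}"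

definition fact_len :: "nat set \<Rightarrow> (nat \<Rightarrow> nat) \<Rightarrow> nat" where
  "fact_len S c = (\<Sum>g\<in>min_gens S. c g)"

definition ord :: "nat set \<Rightarrow> nat \<Rightarrow> nat" where
  "ord S n = Max (fact_len S ` factorizations S n)"

definition dmax_elem :: "nat set \<Rightarrow> nat \<Rightarrow> nat" where
  "dmax_elem S n = card {c \<in> factorizations S n. fact_len S c = ord S n}"

definition dmax :: "nat set \<Rightarrow> nat" where
  "dmax S = Max (dmax_elem S ` S)"

definition additive :: "nat set \<Rightarrow> bool" where
  "additive S \<longleftrightarrow> (\<forall>u\<in>S. ord S (u + multiplicity S) = ord S u + 1)"

text \<open>The blowup tuple D = (e, d_1, ..., d_t), indexed by the minimal generators:
  the generator e is sent to e, a generator a_i \<noteq> e is sent to d_i = a_i - e.\<close>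
definition blowup_weight :: "nat set \<Rightarrow> nat \<Rightarrow> nat" where
  "blowup_weight S g = (if g = multiplicity S then g else g - multiplicity S)"

definition blowup_reps :: "nat set \<Rightarrow> nat \<Rightarrow> (nat \<Rightarrow> nat) set" where
  "blowup_reps S b = {x. (\<forall>g. g \<notin> min_gens S \<longrightarrow> x g = 0) \<and>
      (\<Sum>g\<in>min_gens S. x g * blowup_weight S g) = b}"

definition blowup :: "nat set \<Rightarrow> nat set" where
  "blowup S = {b. blowup_reps S b \<noteq> {}}"

definition d_blowup :: "nat set \<Rightarrow> nat \<Rightarrow> nat" where
  "d_blowup S b = card (blowup_reps S b)"

end

theory Submission
  imports Defs
begin

text \<open>
  Additivity, iterated, gives \<open>ord (u + k e) = ord u + k\<close>. Since the blowup is \<open>\<nat>\<close>, the number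
  \<open>e + 1\<close> is a generator (or \<open>e = 1\<close>), so every \<open>q e + s\<close> with \<open>s < e\<close> and \<open>s \<le> q\<close> has a
  factorization of length \<open>q\<close>; comparing the two for large \<open>k\<close> yields \<open>ord n = n div e\<close>.
  Since a factorization \<open>c\<close> of \<open>n\<close> satisfies \<open>n = |c| e + (\<Sum>g \<noteq> e. c g (g - e))\<close>, forgetting the
  coefficient of \<open>e\<close> embeds the maximal factorizations of \<open>n\<close> into the representations of
  \<open>n mod e\<close> in \<open>B\<close>, bijectively when \<open>n mod e \<le> n div e\<close>. Hence
  \<open>d\<^sub>m\<^sub>a\<^sub>x(n) \<le> d(n mod e) \<le> d(e - 1)\<close>, with equality at \<open>n = e\<^sup>2 - 1\<close>.
\<close>

lemma finite_weighted_reps: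
  fixes v :: "'a \<Rightarrow> nat"
  assumes "finite A" and "\<And>a. a \<in> A \<Longrightarrow> 0 < v a"
  shows "finite {x. (\<forall>a. a \<notin> A \<longrightarrow> x a = 0) \<and> (\<Sum>a\<in>A. x a * v a) = n}"
proof (rule finite_subset)
  show "finite {x. \<forall>a. (a \<in> A \<longrightarrow> x a \<in> {..n}) \<and> (a \<notin> A \<longrightarrow> x a = 0)}"
    using assms(1) by (intro finite_set_of_finite_funs) auto
  have "x a \<le> (\<Sum>a\<in>A. x a * v a)" if "a \<in> A" for x a
  proof -
    have "x a \<le> x a * v a" using assms(2)[OF that] by simp
    also have "\<dots> \<le> (\<Sum>a\<in>A. x a * v a)" using assms(1) that by (intro member_le_sum) auto
    finally show ?thesis .
  qed
  then show "{x. (\<forall>a. a \<notin> A \<longrightarrow> x a = 0) \<and> (\<Sum>a\<in>A. x a * v a) = n}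
      \<subseteq> {x. \<forall>a. (a \<in> A \<longrightarrow> x a \<in> {..n}) \<and> (a \<notin> A \<longrightarrow> x a = 0)}"
    by auto
qed

text \<open>
  \<open>multiplicity S\<close> is \<open>Min\<close> of the infinite set \<open>S - {0}\<close>, hence an unspecified number (the
  same one as \<open>Max {}\<close>). The true multiplicity is \<open>least_nonzero S\<close>; additivity forces the two
  to agree.
\<close>
definition least_nonzero :: "nat set \<Rightarrow> nat" where
  "least_nonzero S = (LEAST x. x \<in> S \<and> x \<noteq> 0)"

definition max_factorizations :: "nat set \<Rightarrow> nat \<Rightarrow> (nat \<Rightarrow> nat) set" where
  "max_factorizations S n = {c \<in> factorizations S n. fact_len S c = ord S n}"

definition blowup_value :: "nat set \<Rightarrow> (nat \<Rightarrow> nat) \<Rightarrow> nat" where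
  "blowup_value S x = (\<Sum>g\<in>min_gens S. x g * blowup_weight S g)"

lemma mem_blowup_reps_iff:
  "x \<in> blowup_reps S b \<longleftrightarrow> (\<forall>g. g \<notin> min_gens S \<longrightarrow> x g = 0) \<and> blowup_value S x = b"
  unfolding blowup_reps_def blowup_value_def by simp

locale num_semigroup =
  fixes S :: "nat set"
  assumes numerical_semigroup: "numerical_semigroup S"
begin

abbreviation "G \<equiv> min_gens S"

lemma zero_mem: "0 \<in> S"
  and add_mem: "x \<in> S \<Longrightarrow> y \<in> S \<Longrightarrow> x + y \<in> S"
  and finite_gaps: "finite (UNIV - S)"
  using numerical_semigroup unfolding numerical_semigroup_def by auto

lemma mult_mem: "g \<in> S \<Longrightarrow> k * g \<in> S"
  by (induction k) (auto simp: zero_mem add_mem)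

lemma sum_mem: "finite A \<Longrightarrow> (\<And>a. a \<in> A \<Longrightarrow> f a \<in> S) \<Longrightarrow> sum f A \<in> S"
  by (induction A rule: finite_induct) (auto simp: zero_mem add_mem)

lemma infinite_semigroup: "infinite S"
proof
  assume "finite S"
  then have "finite (S \<union> (UNIV - S))" using finite_gaps by simp
  then show False by simp
qed

lemma least_nonzero_mem: "least_nonzero S \<in> S"
  and least_nonzero_pos: "least_nonzero S \<noteq> 0"
proof -
  have "\<not> S \<subseteq> {0}" using infinite_semigroup finite_subset by blast
  then have "\<exists>x. x \<in> S \<and> x \<noteq> 0" by blast
  from LeastI_ex[OF this] show "least_nonzero S \<in> S" "least_nonzero S \<noteq> 0"
    unfolding least_nonzero_def by auto
qed

lemma least_nonzero_le: "x \<in> S \<Longrightarrow> x \<noteq> 0 \<Longrightarrow> least_nonzero S \<le> x"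
  unfolding least_nonzero_def by (simp add: Least_le)

lemma min_gens_mem: "g \<in> G \<Longrightarrow> g \<in> S"
  and min_gens_nonzero: "g \<in> G \<Longrightarrow> g \<noteq> 0"
  unfolding min_gens_def by auto

lemma least_nonzero_le_min_gens: "g \<in> G \<Longrightarrow> least_nonzero S \<le> g"
  using min_gens_mem min_gens_nonzero least_nonzero_le by blast

lemma least_nonzero_min_gen: "least_nonzero S \<in> G"
proof -
  have "x + y \<noteq> least_nonzero S" if "x \<in> S" "y \<in> S" "x \<noteq> 0" "y \<noteq> 0" for x y
    using least_nonzero_le[of x] least_nonzero_le[of y] that by linarith
  then show ?thesis
    using least_nonzero_mem least_nonzero_pos unfolding min_gens_def by blast
qed

lemma finite_min_gens: "finite G"
proof (rule finite_subset)
  let ?m = "least_nonzero S"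
  show "G \<subseteq> insert ?m ((\<lambda>x. x + ?m) ` (UNIV - S))"
  proof
    fix g assume g: "g \<in> G"
    show "g \<in> insert ?m ((\<lambda>x. x + ?m) ` (UNIV - S))"
    proof (cases "g = ?m")
      case False
      with least_nonzero_le_min_gens[OF g] have gt: "?m < g" by simp
      have "g - ?m \<notin> S"
      proof
        assume "g - ?m \<in> S"
        moreover have "?m + (g - ?m) = g" "g - ?m \<noteq> 0" using gt by simp_all
        ultimately show False
          using g least_nonzero_mem least_nonzero_pos unfolding min_gens_def by blast
      qed
      then show ?thesis using gt by (auto intro!: image_eqI[of _ _ "g - ?m"])
    qed simp
  qed
  show "finite (insert ?m ((\<lambda>x. x + ?m) ` (UNIV - S)))" using finite_gaps by simp
qed

lemma factorization_mem: "c \<in> factorizations S n \<Longrightarrow> n \<in> S"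
  unfolding factorizations_def using finite_min_gens min_gens_mem
  by (auto intro!: sum_mem mult_mem)

lemma finite_factorizations: "finite (factorizations S n)"
  unfolding factorizations_def
  using finite_weighted_reps[OF finite_min_gens, of id] min_gens_nonzero by simp

lemma ord_ge: "c \<in> factorizations S n \<Longrightarrow> fact_len S c \<le> ord S n"
  unfolding ord_def using finite_factorizations by simp

lemma ord_attained:
  "factorizations S n \<noteq> {} \<Longrightarrow> \<exists>c\<in>factorizations S n. fact_len S c = ord S n"
  unfolding ord_def using finite_factorizations
  by (metis Max_in finite_imageI image_iff image_is_empty)

lemma ord_no_factorization: "factorizations S n = {} \<Longrightarrow> ord S n = multiplicity S"
  using infinite_semigroup
  by (simp add: ord_def multiplicity_def Max.eq_fold' Min.infinite)

lemma fact_len_mult_le: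
  assumes "\<And>g. g \<in> G \<Longrightarrow> a \<le> g" and "c \<in> factorizations S n"
  shows "fact_len S c * a \<le> n"
proof -
  have "fact_len S c * a = (\<Sum>g\<in>G. c g * a)"
    unfolding fact_len_def by (simp add: sum_distrib_right)
  also have "\<dots> \<le> (\<Sum>g\<in>G. c g * g)" using assms(1) by (intro sum_mono) simp
  finally show ?thesis using assms(2) unfolding factorizations_def by simp
qed

lemma single_factorization:
  assumes "g \<in> G"
  shows "(\<lambda>h. if h = g then k else 0) \<in> factorizations S (k * g)"
    and "fact_len S (\<lambda>h. if h = g then k else 0) = k"
proof -
  have "(\<Sum>h\<in>G. (if h = g then k else 0) * h) = (\<Sum>h\<in>G. if h = g then k * g else 0)"
    by (rule sum.cong) auto
  then show "(\<lambda>h. if h = g then k else 0) \<in> factorizations S (k * g)"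
    using assms finite_min_gens unfolding factorizations_def by auto
  show "fact_len S (\<lambda>h. if h = g then k else 0) = k"
    using assms finite_min_gens unfolding fact_len_def by simp
qed

lemma ord_zero: "ord S 0 = 0"
proof -
  have "(\<lambda>h. 0) \<in> factorizations S 0" unfolding factorizations_def by simp
  then obtain c where c: "c \<in> factorizations S 0" "fact_len S c = ord S 0"
    using ord_attained by blast
  have "fact_len S c * 1 \<le> 0"
    using fact_len_mult_le[OF _ c(1), of 1] min_gens_nonzero by (simp add: Suc_le_eq)
  then show ?thesis using c(2) by simp
qed

end

locale additive_semigroup = num_semigroup +
  assumes additive: "additive S"
begin

abbreviation "e \<equiv> multiplicity S"
abbreviation "w \<equiv> blowup_weight S"

lemma ord_add_multiplicity: "u \<in> S \<Longrightarrow> ord S (u + e) = ord S u + 1"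
  using additive unfolding additive_def by blast

lemma multiplicity_pos: "e \<noteq> 0"
  using ord_add_multiplicity[OF zero_mem] by (metis add_0 n_not_Suc_n Suc_eq_plus1)

text \<open>If \<open>e \<notin> S\<close>, then \<open>ord e\<close> is the junk value \<open>Max {} = e\<close>, so \<open>e = 1\<close>; additivity then
  gives \<open>m + 1\<close>, for \<open>m\<close> the least nonzero element, a factorization of length \<open>2\<close>, forcing \<open>m \<le> 1\<close>.\<close>
lemma multiplicity_mem: "e \<in> S"
proof (rule ccontr)
  let ?m = "least_nonzero S"
  assume e_notin: "e \<notin> S"
  then have "ord S e = e" using factorization_mem ord_no_factorization by blast
  then have e1: "e = 1" using ord_add_multiplicity[OF zero_mem] ord_zero by simp
  have "1 \<le> ord S ?m"
    using single_factorization[OF least_nonzero_min_gen, of 1] ord_ge by fastforce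
  then have "2 \<le> ord S (?m + 1)" using ord_add_multiplicity[OF least_nonzero_mem] e1 by simp
  then have "factorizations S (?m + 1) \<noteq> {}" using ord_no_factorization e1 by fastforce
  then obtain c where c: "c \<in> factorizations S (?m + 1)" "fact_len S c = ord S (?m + 1)"
    using ord_attained by blast
  have "fact_len S c * ?m \<le> ?m + 1"
    using fact_len_mult_le[OF least_nonzero_le_min_gens c(1)] .
  with \<open>2 \<le> ord S (?m + 1)\<close> c(2) have "2 * ?m \<le> ?m + 1"
    by (metis le_trans mult_le_mono1)
  moreover have "?m \<noteq> 1" using least_nonzero_mem e_notin e1 by auto
  ultimately show False using least_nonzero_pos by linarith
qed

lemma ord_add_mult: "u \<in> S \<Longrightarrow> ord S (u + k * e) = ord S u + k"
proof (induction k)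
  case (Suc k)
  have "u + k * e \<in> S" using Suc.prems multiplicity_mem by (simp add: add_mem mult_mem)
  then show ?case using Suc ord_add_multiplicity[of "u + k * e"] by (simp add: ac_simps)
qed simp

text \<open>Comparing \<open>ord (m e) = m\<close> with the factorization of \<open>e m\<close> as \<open>e\<close> copies of \<open>m\<close>.\<close>
lemma multiplicity_eq_least_nonzero: "e = least_nonzero S"
proof (rule antisym)
  let ?m = "least_nonzero S"
  have "ord S (?m * e) = ?m" using ord_add_mult[OF zero_mem, of ?m] ord_zero by simp
  then show "e \<le> ?m"
    using single_factorization[OF least_nonzero_min_gen, of e] ord_ge by (metis mult.commute)
  show "?m \<le> e" using least_nonzero_le multiplicity_mem multiplicity_pos by blast
qed

lemma multiplicity_min_gen: "e \<in> G"
  using least_nonzero_min_gen multiplicity_eq_least_nonzero by simp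

lemma multiplicity_le_min_gens: "g \<in> G \<Longrightarrow> e \<le> g"
  using least_nonzero_le_min_gens multiplicity_eq_least_nonzero by simp

lemma blowup_weight_pos: "g \<in> G \<Longrightarrow> 0 < w g"
  using multiplicity_le_min_gens[of g] multiplicity_pos
  unfolding blowup_weight_def by (cases "g = e") auto

lemma finite_blowup_reps: "finite (blowup_reps S b)"
  unfolding blowup_reps_def
  using finite_weighted_reps[OF finite_min_gens] blowup_weight_pos by simp

lemma fact_len_split: "fact_len S c = c e + fact_len S (c(e := 0))"
  unfolding fact_len_def using finite_min_gens multiplicity_min_gen
  by (simp add: sum.remove)

lemma fact_len_le_blowup_value: "fact_len S x \<le> blowup_value S x"
  unfolding fact_len_def blowup_value_def
  using blowup_weight_pos by (intro sum_mono) (simp add: Suc_le_eq)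

lemma factorization_value_split:
  "(\<Sum>g\<in>G. c g * g) = fact_len S c * e + blowup_value S (c(e := 0))"
proof -
  have "c g * g = c g * e + (c(e := 0)) g * w g" if "g \<in> G" for g
    using multiplicity_le_min_gens[OF that]
    by (cases "g = e") (auto simp: blowup_weight_def diff_mult_distrib2)
  then have "(\<Sum>g\<in>G. c g * g) = (\<Sum>g\<in>G. c g * e + (c(e := 0)) g * w g)"
    by (rule sum.cong[OF refl])
  then show ?thesis
    unfolding fact_len_def blowup_value_def by (simp add: sum.distrib sum_distrib_right)
qed

lemma blowup_rep_vanishes_at_multiplicity:
  assumes "x \<in> blowup_reps S b" and "b < e"
  shows "x e = 0"
proof -
  have "x e * e \<le> blowup_value S x"
    unfolding blowup_value_def
    using member_le_sum[of e G "\<lambda>g. x g * w g"] multiplicity_min_gen finite_min_gens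
    by (simp add: blowup_weight_def)
  moreover have "blowup_value S x = b" using assms(1) by (simp add: mem_blowup_reps_iff)
  ultimately have "x e * e < e" using assms(2) by linarith
  then show ?thesis by (cases "x e") auto
qed

end

locale additive_nat_blowup = additive_semigroup +
  assumes blowup_UNIV: "blowup S = UNIV"
begin

lemma unit_weight_gen: "\<exists>g\<in>G. w g = 1"
proof -
  obtain x where "x \<in> blowup_reps S 1"
    using blowup_UNIV unfolding blowup_def by auto
  then have "(\<Sum>g\<in>G. x g * w g) = 1" by (simp add: mem_blowup_reps_iff blowup_value_def)
  then obtain g where "g \<in> G" "x g * w g = 1"
    using sum_eq_1_iff[OF finite_min_gens, of "\<lambda>g. x g * w g"] by auto
  then show ?thesis by auto
qed

lemma multiplicity_one_or_succ_min_gen: "e = 1 \<or> e + 1 \<in> G"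
proof -
  obtain g where "g \<in> G" "w g = 1" using unit_weight_gen by blast
  moreover have "g = e + 1" if "g \<noteq> e"
    using \<open>w g = 1\<close> that unfolding blowup_weight_def by simp
  ultimately show ?thesis unfolding blowup_weight_def by (cases "g = e") auto
qed

text \<open>The factorization \<open>(q - s) e + s (e + 1)\<close>.\<close>
lemma long_factorization:
  assumes "s < e" and "s \<le> q"
  shows "\<exists>c\<in>factorizations S (q * e + s). fact_len S c = q"
proof
  define c where "c h = (if h = e then q - s else 0) + (if h = e + 1 then s else 0)" for h
  have gen: "s = 0 \<or> e + 1 \<in> G" using assms(1) multiplicity_one_or_succ_min_gen by auto
  have "c h * h = (if h = e then (q - s) * e else 0) + (if h = e + 1 then s * (e + 1) else 0)"
    for h by (simp add: c_def)
  then have "(\<Sum>h\<in>G. c h * h) = (\<Sum>h\<in>G. if h = e then (q - s) * e else 0)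
      + (\<Sum>h\<in>G. if h = e + 1 then s * (e + 1) else 0)"
    by (simp add: sum.distrib)
  also have "\<dots> = q * e + s"
    using gen assms(2) multiplicity_min_gen finite_min_gens by (auto simp: algebra_simps)
  finally show "c \<in> factorizations S (q * e + s)"
    using gen multiplicity_min_gen unfolding factorizations_def c_def by auto
  have "fact_len S c = (\<Sum>h\<in>G. if h = e then q - s else 0) + (\<Sum>h\<in>G. if h = e + 1 then s else 0)"
    unfolding fact_len_def c_def by (simp add: sum.distrib)
  then show "fact_len S c = q"
    using gen assms(2) multiplicity_min_gen finite_min_gens by auto
qed

lemma ord_eq_div:
  assumes "factorizations S n \<noteq> {}"
  shows "ord S n = n div e"
proof (rule antisym)
  obtain c where c: "c \<in> factorizations S n" "fact_len S c = ord S n"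
    using ord_attained[OF assms] by blast
  have "ord S n * e \<le> n"
    using fact_len_mult_le[OF multiplicity_le_min_gens c(1)] c(2) by simp
  then show "ord S n \<le> n div e"
    using multiplicity_pos by (simp add: less_eq_div_iff_mult_less_eq)
  have "n mod e < e" using multiplicity_pos by simp
  moreover have "n + e * e = (n div e + e) * e + n mod e" by (simp add: algebra_simps)
  ultimately obtain c' where "c' \<in> factorizations S (n + e * e)" "fact_len S c' = n div e + e"
    using long_factorization[of "n mod e" "n div e + e"] by auto
  then have "n div e + e \<le> ord S (n + e * e)" using ord_ge by metis
  also have "\<dots> = ord S n + e" using ord_add_mult[OF factorization_mem[OF c(1)]] .
  finally show "n div e \<le> ord S n" by simp
qed

lemma restrict_max_factorization:
  assumes "c \<in> max_factorizations S n"
  shows "c(e := 0) \<in> blowup_reps S (n mod e)"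
proof -
  have c: "c \<in> factorizations S n" "fact_len S c = ord S n"
    using assms unfolding max_factorizations_def by auto
  moreover have "ord S n = n div e" using c(1) ord_eq_div by blast
  ultimately have "n = n div e * e + blowup_value S (c(e := 0))"
    using factorization_value_split[of c] unfolding factorizations_def by simp
  then have "blowup_value S (c(e := 0)) = n mod e"
    using div_mult_mod_eq[of n e] by linarith
  then show ?thesis using c(1) by (simp add: mem_blowup_reps_iff factorizations_def)
qed

lemma inj_on_restrict_max_factorizations:
  "inj_on (\<lambda>c. c(e := 0)) (max_factorizations S n)"
proof (rule inj_onI)
  fix c c' assume "c \<in> max_factorizations S n" "c' \<in> max_factorizations S n"
    and eq: "c(e := 0) = c'(e := 0)"
  then have "fact_len S c = fact_len S c'" unfolding max_factorizations_def by simp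
  then have "c e = c' e" using eq fact_len_split[of c] fact_len_split[of c'] by simp
  with eq show "c = c'" by (metis fun_upd_triv fun_upd_upd)
qed

lemma lift_blowup_rep:
  assumes x: "x \<in> blowup_reps S (n mod e)" and small: "n mod e \<le> n div e"
  shows "x(e := n div e - fact_len S x) \<in> max_factorizations S n"
proof -
  define c where "c = x(e := n div e - fact_len S x)"
  have "x e = 0"
    using blowup_rep_vanishes_at_multiplicity[OF x] multiplicity_pos by simp
  then have restrict: "c(e := 0) = x" unfolding c_def by auto
  have "fact_len S x \<le> n div e"
    using fact_len_le_blowup_value[of x] x small by (simp add: mem_blowup_reps_iff)
  then have len: "fact_len S c = n div e" using fact_len_split[of c] restrict
    unfolding c_def by simp
  have "(\<Sum>g\<in>G. c g * g) = n"
    using factorization_value_split[of c] restrict len x by (simp add: mem_blowup_reps_iff)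
  then have fact: "c \<in> factorizations S n"
    using x multiplicity_min_gen unfolding c_def
    by (auto simp: mem_blowup_reps_iff factorizations_def)
  moreover have "ord S n = n div e" using fact ord_eq_div by blast
  ultimately show ?thesis using len unfolding c_def max_factorizations_def by simp
qed

lemma dmax_elem_eq_card_restrict:
  "dmax_elem S n = card ((\<lambda>c. c(e := 0)) ` max_factorizations S n)"
  unfolding dmax_elem_def max_factorizations_def[symmetric]
  using card_image[OF inj_on_restrict_max_factorizations] by simp

lemma dmax_elem_le_d_blowup: "dmax_elem S n \<le> d_blowup S (n mod e)"
  unfolding dmax_elem_eq_card_restrict d_blowup_def
  using restrict_max_factorization finite_blowup_reps by (intro card_mono) auto

lemma dmax_elem_eq_d_blowup:
  assumes "n mod e \<le> n div e"
  shows "dmax_elem S n = d_blowup S (n mod e)"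
proof -
  have "blowup_reps S (n mod e) \<subseteq> (\<lambda>c. c(e := 0)) ` max_factorizations S n"
  proof
    fix x assume x: "x \<in> blowup_reps S (n mod e)"
    have "x = (x(e := n div e - fact_len S x))(e := 0)"
      using blowup_rep_vanishes_at_multiplicity[OF x] multiplicity_pos by auto
    then show "x \<in> (\<lambda>c. c(e := 0)) ` max_factorizations S n"
      using lift_blowup_rep[OF x assms] by blast
  qed
  moreover have "finite (max_factorizations S n)"
    unfolding max_factorizations_def using finite_factorizations by simp
  ultimately have "d_blowup S (n mod e) \<le> dmax_elem S n"
    unfolding dmax_elem_eq_card_restrict d_blowup_def by (intro card_mono) auto
  then show ?thesis using dmax_elem_le_d_blowup le_antisym by blast
qed

text \<open>Adding to the coefficient of a generator of weight 1 embeds the representations of \<open>b\<close> into those of \<open>b'\<close>.\<close>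
lemma d_blowup_mono:
  assumes "b \<le> b'"
  shows "d_blowup S b \<le> d_blowup S b'"
proof -
  obtain g1 where g1: "g1 \<in> G" "w g1 = 1" using unit_weight_gen by blast
  define f where "f x = x(g1 := x g1 + (b' - b))" for x :: "nat \<Rightarrow> nat"
  have "inj_on f (blowup_reps S b)"
    unfolding f_def by (rule inj_onI) (metis add_right_cancel fun_upd_eqD fun_upd_idem_iff fun_upd_upd)
  moreover have "f ` blowup_reps S b \<subseteq> blowup_reps S b'"
  proof
    fix y assume "y \<in> f ` blowup_reps S b"
    then obtain x where x: "x \<in> blowup_reps S b" and y: "y = f x" by blast
    have "blowup_value S y = (\<Sum>g\<in>G. x g * w g + (if g = g1 then b' - b else 0))"
      unfolding blowup_value_def y f_def using g1(2) by (intro sum.cong) (auto simp: algebra_simps)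
    also have "\<dots> = b'"
      using x g1(1) finite_min_gens assms by (simp add: sum.distrib mem_blowup_reps_iff blowup_value_def)
    finally show "y \<in> blowup_reps S b'"
      using x g1(1) unfolding y f_def by (auto simp: mem_blowup_reps_iff)
  qed
  ultimately show ?thesis
    unfolding d_blowup_def using card_inj_on_le finite_blowup_reps by blast
qed

lemma dmax_eq_d_blowup: "dmax S = d_blowup S (e - 1)"
proof -
  let ?D = "d_blowup S (e - 1)" and ?n = "(e - 1) * e + (e - 1)"
  have div_mod: "?n div e = e - 1" "?n mod e = e - 1"
    using multiplicity_pos
    by (simp_all only: div_mult_self3[OF multiplicity_pos] mod_mult_self3) simp_all
  have "?n \<in> S"
    using long_factorization[of "e - 1" "e - 1"] multiplicity_pos factorization_mem by auto
  moreover have "dmax_elem S ?n = ?D" using dmax_elem_eq_d_blowup div_mod by simp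
  moreover have "dmax_elem S n \<le> ?D" for n
  proof -
    have "n mod e < e" using multiplicity_pos by simp
    then have "n mod e \<le> e - 1" by linarith
    then show ?thesis using dmax_elem_le_d_blowup[of n] d_blowup_mono le_trans by blast
  qed
  ultimately have "Max (dmax_elem S ` S) = ?D"
    by (intro Max_eqI) (auto intro: finite_subset[of _ "{..?D}"] image_eqI[of _ _ ?n])
  then show ?thesis unfolding dmax_def .
qed

end

theorem proposition4p13:
  fixes S :: "nat set"
  assumes "numerical_semigroup S"
    and "additive S"
    and "blowup S = UNIV"
  shows "dmax S = d_blowup S (multiplicity S - 1)"
proof -
  interpret additive_nat_blowup S using assms by unfold_locales
  show ?thesis by (rule dmax_eq_d_blowup)
qed

end
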